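(* Let $a>b\ge1$ be coprime positive integers and $\alpha_b,\alpha_{b+1},\dots,\alpha_a$ integers with $|\alpha_b|=1$. For each $N\in\mathbb N$ consider the equation $$m^a=\sum_{j=b}^a\alpha_jn^jN^{a-j}$$ in positive integers $m$. Then for every $\delta>0$ there exist $N_\delta$ and sets $\Gamma_{N,\delta}\subset[1,N]$ of cardinality at most $\delta N$ such that for all $N>N_\delta$ and all integers $n\in[1,N]\setminus\Gamma_{N,\delta}$ there is no positive integer $m$ satisfying this equation. *)

theory Defs
  imports Complex_Main
begin

end

theory Submission
  imports Defs "HOL-Computational_Algebra.Nth_Powers"
begin

text \<open>
  Let \<open>g = gcd n N\<close>, \<open>n = g n'\<close>, \<open>N = g N'\<close>. By homogeneity \<open>g\<^sup>a\<close> divides \<open>m\<^sup>a\<close>, and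
  cancelling it leaves \<open>m'\<^sup>a = n'\<^sup>b P\<close> with \<open>P \<equiv> \<alpha>\<^sub>b N'\<^sup>a\<^sup>-\<^sup>b (mod n')\<close>, so \<open>P\<close> is
  coprime to \<open>n'\<close>. Hence \<open>n'\<^sup>b\<close> is an \<open>a\<close>-th power, and as \<open>gcd a b = 1\<close> so is
  \<open>n' = t\<^sup>a\<close>. Every solvable \<open>n\<close> is therefore of the form \<open>(N/f) t\<^sup>a\<close> with \<open>f | N\<close> and
  \<open>t\<^sup>2 \<le> f\<close>. Splitting according to \<open>f \<le> L\<^sup>2\<close>, \<open>t \<le> L < \<surd>f\<close> or \<open>t > L\<close> shows there
  are at most \<open>L\<^sup>3 + 2N/L\<close> such \<open>n\<close>, which is below \<open>\<delta>N\<close> for \<open>L \<approx> 4/\<delta>\<close> and \<open>N\<close> large.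
\<close>

lemma sum_binary_form_scale:
  fixes c :: "nat \<Rightarrow> 'a::comm_semiring_1"
  shows "(\<Sum>j=b..a. c j * (g * x) ^ j * (g * y) ^ (a - j))
           = g ^ a * (\<Sum>j=b..a. c j * x ^ j * y ^ (a - j))"
  unfolding sum_distrib_left
proof (rule sum.cong [OF refl])
  fix j assume "j \<in> {b..a}"
  then have "g ^ a = g ^ j * g ^ (a - j)"
    by (simp flip: power_add)
  then show "c j * (g * x) ^ j * (g * y) ^ (a - j) = g ^ a * (c j * x ^ j * y ^ (a - j))"
    by (simp add: power_mult_distrib algebra_simps)
qed

lemma sum_binary_form_factor_lowest:
  fixes c :: "nat \<Rightarrow> 'a::comm_semiring_1"
  shows "(\<Sum>j=b..a. c j * x ^ j * y ^ (a - j))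
           = x ^ b * (\<Sum>j=b..a. c j * x ^ (j - b) * y ^ (a - j))"
  unfolding sum_distrib_left
proof (rule sum.cong [OF refl])
  fix j assume "j \<in> {b..a}"
  then have "x ^ j = x ^ b * x ^ (j - b)"
    by (simp flip: power_add)
  then show "c j * x ^ j * y ^ (a - j) = x ^ b * (c j * x ^ (j - b) * y ^ (a - j))"
    by (simp add: algebra_simps)
qed

lemma coprime_sum_binary_form_cofactor:
  fixes c :: "nat \<Rightarrow> 'a::ring_gcd"
  assumes "b \<le> a" and "coprime x y" and "is_unit (c b)"
  shows "coprime x (\<Sum>j=b..a. c j * x ^ (j - b) * y ^ (a - j))"
proof -
  define Q where "Q = (\<Sum>j=Suc b..a. c j * x ^ (j - Suc b) * y ^ (a - j))"
  have "{b..a} = insert b {Suc b..a}"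
    using assms(1) by auto
  moreover have "(\<Sum>j=Suc b..a. c j * x ^ (j - b) * y ^ (a - j)) = Q * x"
    unfolding Q_def sum_distrib_right
  proof (rule sum.cong [OF refl])
    fix j assume "j \<in> {Suc b..a}"
    then have "x ^ (j - b) = x ^ (j - Suc b) * x"
      by (simp flip: power_Suc2 add: Suc_diff_Suc)
    then show "c j * x ^ (j - b) * y ^ (a - j) = c j * x ^ (j - Suc b) * y ^ (a - j) * x"
      by (simp add: algebra_simps)
  qed
  ultimately have "(\<Sum>j=b..a. c j * x ^ (j - b) * y ^ (a - j)) = Q * x + c b * y ^ (a - b)"
    by (simp add: add.commute)
  moreover have "coprime x (c b * y ^ (a - b))"
    using assms(2,3) by (simp add: is_unit_right_imp_coprime)
  ultimately show ?thesis
    by (simp add: coprime_iff_gcd_eq_1 gcd_add_mult)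
qed

lemma is_nth_power_of_coprime_factor:
  fixes x y M :: nat
  assumes "coprime a b" and "coprime x y" and "x ^ b * y = M ^ a" and "a > 0" and "y > 0"
  shows "is_nth_power a x"
proof (cases "x = 0")
  case False
  have "is_nth_power a (x ^ b)"
    using is_nth_power_mult_coprime_natD(1)[of "x ^ b" y a] assms False by simp
  then have "a dvd b * multiplicity p x" if "prime p" for p
    using that False assms(4)
    by (simp add: is_nth_power_conv_multiplicity_nat prime_elem_multiplicity_power_distrib)
  then show ?thesis
    using assms(1,4) by (simp add: is_nth_power_conv_multiplicity_nat coprime_dvd_mult_right_iff)
qed (use assms(4) in simp)

definition exceptional_set :: "nat \<Rightarrow> nat \<Rightarrow> nat set" where
  "exceptional_set a N =
     {n \<in> {1..N}. \<exists>f t. f dvd N \<and> 1 \<le> t \<and> t ^ 2 \<le> f \<and> n = N div f * t ^ a}"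

lemma is_nth_power_div_gcd_of_solution:
  fixes \<alpha> :: "nat \<Rightarrow> int" and m :: int
  assumes "b \<le> a" and "a > 0" and "coprime a b" and "is_unit (\<alpha> b)"
    and "n > 0" and "m > 0"
    and eq: "m ^ a = (\<Sum>j=b..a. \<alpha> j * int n ^ j * int N ^ (a - j))"
  shows "is_nth_power a (n div gcd n N)"
proof -
  define g where "g = gcd n N"
  define n' where "n' = n div g"
  define N' where "N' = N div g"
  have "g > 0" and n_eq: "n = g * n'" and N_eq: "N = g * N'"
    using \<open>n > 0\<close> by (simp_all add: g_def n'_def N'_def)
  have "coprime n' N'"
    using \<open>n > 0\<close> unfolding n'_def N'_def g_def by (intro div_gcd_coprime) auto
  define P where "P = (\<Sum>j=b..a. \<alpha> j * int n' ^ (j - b) * int N' ^ (a - j))"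
  have sum_eq: "(\<Sum>j=b..a. \<alpha> j * int n ^ j * int N ^ (a - j)) = int g ^ a * (int n' ^ b * P)"
    using sum_binary_form_scale [where c = \<alpha> and g = "int g" and x = "int n'" and y = "int N'"]
    by (simp add: n_eq N_eq P_def sum_binary_form_factor_lowest [symmetric])
  then have "int g ^ a dvd m ^ a"
    using eq by simp
  then have "int g dvd m"
    using \<open>a > 0\<close> pow_divides_pow_iff by blast
  then obtain m' where m': "m = int g * m'" ..
  with eq sum_eq \<open>g > 0\<close> have m'_eq: "m' ^ a = int n' ^ b * P"
    by (simp add: power_mult_distrib)
  have "m' > 0" and "n' > 0"
    using \<open>m > 0\<close> m' \<open>g > 0\<close> \<open>n > 0\<close> n_eq by (auto simp: zero_less_mult_iff)
  with m'_eq have "P > 0"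
    by (metis zero_less_mult_iff zero_less_power of_nat_0_less_iff not_less_iff_gr_or_eq)
  have "coprime (int n') P"
    unfolding P_def using assms(1,4) \<open>coprime n' N'\<close>
    by (intro coprime_sum_binary_form_cofactor) auto
  with \<open>P > 0\<close> have "coprime n' (nat P)"
    by (metis coprime_int_iff int_nat_eq order_less_imp_le)
  moreover have "int (n' ^ b * nat P) = int (nat m' ^ a)"
    using m'_eq \<open>m' > 0\<close> \<open>P > 0\<close> by simp
  then have "n' ^ b * nat P = nat m' ^ a"
    by (simp only: of_nat_eq_iff)
  ultimately have "is_nth_power a n'"
    using is_nth_power_of_coprime_factor [OF assms(3) _ _ assms(2)] \<open>P > 0\<close> by simp
  then show ?thesis
    by (simp add: n'_def g_def)
qed

lemma solution_imp_exceptional: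
  fixes \<alpha> :: "nat \<Rightarrow> int" and m :: int
  assumes "b \<le> a" and "2 \<le> a" and "coprime a b" and "is_unit (\<alpha> b)"
    and n: "n \<in> {1..N}" and "m > 0"
    and "m ^ a = (\<Sum>j=b..a. \<alpha> j * int n ^ j * int N ^ (a - j))"
  shows "n \<in> exceptional_set a N"
proof -
  define g where "g = gcd n N"
  define N' where "N' = N div g"
  have "g > 0" and n_eq: "n = g * (n div g)" and N_eq: "N = g * N'"
    using n by (simp_all add: g_def N'_def)
  obtain t where t: "n div g = t ^ a"
    using is_nth_power_div_gcd_of_solution [of b a \<alpha> n m N] assms
    unfolding g_def by (auto elim: is_nth_powerE)
  have "t \<ge> 1"
    using n n_eq t assms(2) by (cases t) (auto simp: zero_power)
  with assms(2) have "t ^ 2 \<le> n div g"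
    unfolding t by (intro power_increasing) auto
  also have "n div g \<le> N'"
    using n N_eq \<open>g > 0\<close> unfolding N'_def by (simp add: div_le_mono)
  finally have "t ^ 2 \<le> N'" .
  then have "N div N' = g"
    using N_eq \<open>t \<ge> 1\<close> by (metis le_trans nonzero_mult_div_cancel_right one_le_power not_one_le_zero)
  moreover have "N' dvd N"
    using N_eq by simp
  ultimately show ?thesis
    unfolding exceptional_set_def using n n_eq t \<open>t ^ 2 \<le> N'\<close> \<open>t \<ge> 1\<close> by auto
qed

lemma sum_div_square_le:
  fixes L N :: nat
  assumes "L \<ge> 1"
  shows "(\<Sum>t=Suc L..N. real (N div t ^ 2)) \<le> real N / real L"
proof (cases "L \<le> N")
  case True
  define f :: "nat \<Rightarrow> real" where "f k = - real N / real k" for k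
  have "(\<Sum>t=Suc L..N. real (N div t ^ 2)) \<le> (\<Sum>t=Suc L..N. f t - f (t - 1))"
  proof (rule sum_mono)
    fix t assume "t \<in> {Suc L..N}"
    then have t: "real t \<ge> 2"
      using assms by auto
    have "real (N div t ^ 2) \<le> real N / (real t * real t)"
      using of_nat_div_le_of_nat [of N "t ^ 2"] by (simp add: power2_eq_square)
    also have "\<dots> \<le> real N / (real t * (real t - 1))"
      using t by (intro divide_left_mono mult_left_mono) auto
    also have "\<dots> = f t - f (t - 1)"
      using t by (simp add: f_def of_nat_diff field_simps)
    finally show "real (N div t ^ 2) \<le> f t - f (t - 1)" .
  qed
  also have "\<dots> = f N - f L"
    using True by (rule sum_telescope'')
  also have "\<dots> \<le> real N / real L"
    by (simp add: f_def)
  finally show ?thesis .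
qed simp

lemma exceptional_set_subset:
  fixes L :: nat
  assumes "L \<ge> 1"
  shows "exceptional_set a N \<subseteq>
           (\<lambda>(f, t). N div f * t ^ a) ` ({1..L ^ 2} \<times> {1..L})
           \<union> (\<lambda>(e, t). e * t ^ a) ` ({1..N div L ^ 2} \<times> {1..L})
           \<union> (\<lambda>(t, e). e * t ^ a) ` (SIGMA t:{Suc L..N}. {1..N div t ^ 2})"
    (is "_ \<subseteq> ?A \<union> ?B \<union> ?C")
proof
  fix n assume "n \<in> exceptional_set a N"
  then obtain f t where n: "n \<in> {1..N}" and "f dvd N" and t: "1 \<le> t" "t ^ 2 \<le> f"
    and n_eq: "n = N div f * t ^ a"
    unfolding exceptional_set_def by blast
  define e where "e = N div f"
  have N_eq: "N = e * f"
    using \<open>f dvd N\<close> by (simp add: e_def)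
  have "e \<ge> 1"
    using N_eq n by (cases "e = 0") auto
  then have "f \<le> N"
    using N_eq by simp
  consider "t \<le> L" "f \<le> L ^ 2" | "t \<le> L" "f > L ^ 2" | "t > L"
    by linarith
  then show "n \<in> ?A \<union> ?B \<union> ?C"
  proof cases
    case 1
    have "1 \<le> f"
      using t one_le_power order_trans by blast
    with 1 t have "(f, t) \<in> {1..L ^ 2} \<times> {1..L}"
      by auto
    then have "n \<in> ?A"
      unfolding n_eq by (rule rev_image_eqI) simp
    then show ?thesis
      by blast
  next
    case 2
    then have "e * L ^ 2 \<le> N"
      using N_eq by simp
    then have "(e, t) \<in> {1..N div L ^ 2} \<times> {1..L}"
      using 2 t \<open>e \<ge> 1\<close> assms by (simp add: less_eq_div_iff_mult_less_eq)
    then have "n \<in> ?B"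
      unfolding n_eq e_def [symmetric] by (rule rev_image_eqI) simp
    then show ?thesis
      by blast
  next
    case 3
    have "e * t ^ 2 \<le> N"
      using t N_eq by simp
    moreover have "t \<le> N"
      using t \<open>f \<le> N\<close> by (metis le_trans power2_nat_le_imp_le)
    ultimately have "(t, e) \<in> (SIGMA t:{Suc L..N}. {1..N div t ^ 2})"
      using 3 t \<open>e \<ge> 1\<close> by (simp add: less_eq_div_iff_mult_less_eq)
    then have "n \<in> ?C"
      unfolding n_eq e_def [symmetric] by (rule rev_image_eqI) simp
    then show ?thesis
      by blast
  qed
qed

lemma card_exceptional_set_le:
  fixes L :: nat
  assumes "L \<ge> 1"
  shows "real (card (exceptional_set a N)) \<le> real L ^ 3 + 2 * real N / real L"
proof -
  define A where "A = (\<lambda>(f, t). N div f * t ^ a) ` ({1..L ^ 2} \<times> {1..L})"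
  define B where "B = (\<lambda>(e, t). e * t ^ a) ` ({1..N div L ^ 2} \<times> {1..L})"
  define C where "C = (\<lambda>(t, e). e * t ^ a) ` (SIGMA t:{Suc L..N}. {1..N div t ^ 2})"
  have "card (exceptional_set a N) \<le> card (A \<union> B \<union> C)"
    using exceptional_set_subset [OF assms, of a N] unfolding A_def B_def C_def
    by (intro card_mono) auto
  also have "\<dots> \<le> card A + card B + card C"
    by (meson card_Un_le add_right_mono order_trans)
  finally have card_le: "real (card (exceptional_set a N)) \<le> card A + card B + card C"
    by linarith
  have "card A \<le> L ^ 2 * L"
    unfolding A_def using card_image_le [of "{1..L ^ 2} \<times> {1..L}"] by simp
  then have card_A: "real (card A) \<le> real L ^ 3"
    by (simp add: power3_eq_cube power2_eq_square flip: of_nat_mult)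
  have "card B \<le> N div L ^ 2 * L"
    unfolding B_def using card_image_le [of "{1..N div L ^ 2} \<times> {1..L}"] by simp
  then have "real (card B) \<le> real (N div L ^ 2) * real L"
    by (metis of_nat_le_iff of_nat_mult)
  also have "\<dots> \<le> real N / real L ^ 2 * real L"
    using of_nat_div_le_of_nat [of N "L ^ 2"] by (intro mult_right_mono) auto
  also have "\<dots> = real N / real L"
    using assms by (simp add: power2_eq_square)
  finally have card_B: "real (card B) \<le> real N / real L" .
  have "card C \<le> (\<Sum>t=Suc L..N. N div t ^ 2)"
    unfolding C_def using card_image_le [of "SIGMA t:{Suc L..N}. {1..N div t ^ 2}"] by simp
  then have "real (card C) \<le> (\<Sum>t=Suc L..N. real (N div t ^ 2))"
    by (metis of_nat_le_iff of_nat_sum)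
  also have "\<dots> \<le> real N / real L"
    using assms by (rule sum_div_square_le)
  finally have card_C: "real (card C) \<le> real N / real L" .
  show ?thesis
    using card_le card_A card_B card_C by linarith
qed

lemma eventually_card_exceptional_set_le:
  fixes \<delta> :: real
  assumes "\<delta> > 0"
  shows "eventually (\<lambda>N. real (card (exceptional_set a N)) \<le> \<delta> * real N) at_top"
proof -
  obtain L :: nat where L: "4 / \<delta> \<le> real L"
    using real_arch_simple by blast
  moreover have "4 / \<delta> > 0"
    using assms by simp
  ultimately have "L \<ge> 1"
    by (cases L) auto
  have tail: "2 * real N / real L \<le> \<delta> / 2 * real N" for N :: nat
  proof -
    have "real N * 4 \<le> real N * (\<delta> * real L)"
      using L assms by (intro mult_left_mono) (auto simp: field_simps)
    then show ?thesis
      using \<open>L \<ge> 1\<close> by (simp add: field_simps)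
  qed
  have "eventually (\<lambda>N. real L ^ 3 \<le> \<delta> / 2 * real N) at_top"
    using eventually_ge_at_top [of "nat \<lceil>2 * real L ^ 3 / \<delta>\<rceil>"]
  proof eventually_elim
    case (elim N)
    then have "2 * real L ^ 3 / \<delta> \<le> real N"
      using real_nat_ceiling_ge [of "2 * real L ^ 3 / \<delta>"] by (meson of_nat_le_iff order_trans)
    then show ?case
      using assms by (simp add: field_simps)
  qed
  then show ?thesis
  proof eventually_elim
    case (elim N)
    then show ?case
      using card_exceptional_set_le [OF \<open>L \<ge> 1\<close>, of a N] tail [of N] by linarith
  qed
qed

theorem mainTheorem6:
  fixes a b :: nat and \<alpha> :: "nat \<Rightarrow> int"
  assumes "b \<ge> 1" and "a > b" and "coprime a b" and "\<bar>\<alpha> b\<bar> = 1"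
  shows "\<forall>\<delta>::real. \<delta> > 0 \<longrightarrow>
           (\<exists>N\<^sub>\<delta>::nat. \<exists>\<Gamma> :: nat \<Rightarrow> nat set.
              \<forall>N::nat. N > N\<^sub>\<delta> \<longrightarrow>
                 \<Gamma> N \<subseteq> {1..N} \<and> real (card (\<Gamma> N)) \<le> \<delta> * real N \<and>
                 (\<forall>n \<in> {1..N} - \<Gamma> N. \<not> (\<exists>m::int. m > 0 \<and>
                     m ^ a = (\<Sum>j=b..a. \<alpha> j * int n ^ j * int N ^ (a - j)))))"
proof -
  define solvable where "solvable n N \<longleftrightarrow>
    (\<exists>m::int. m > 0 \<and> m ^ a = (\<Sum>j=b..a. \<alpha> j * int n ^ j * int N ^ (a - j)))" for n N
  have small: "\<exists>N\<^sub>\<delta>. \<forall>N>N\<^sub>\<delta>. real (card (exceptional_set a N)) \<le> \<delta> * real N"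
    if "\<delta> > 0" for \<delta> :: real
    using eventually_card_exceptional_set_le [OF that, of a] unfolding eventually_at_top_dense .
  have "exceptional_set a N \<subseteq> {1..N}" for N
    unfolding exceptional_set_def by blast
  moreover have "n \<in> exceptional_set a N" if "n \<in> {1..N}" and "solvable n N" for n N
    using assms that unfolding solvable_def
    by (auto intro: solution_imp_exceptional [of b a \<alpha>] simp: zdvd1_eq)
  ultimately show ?thesis
    unfolding solvable_def [symmetric] using small by (metis DiffD1 DiffD2)
qed

end
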